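(* Let $Q$ be a groupoid quantale with base locale $A$ and let $X$ be a supported $Q$-module with support $\varsigma_X$. Then the following conditions are equivalent: (1) $\varsigma_X(q\cdot x)=\varsigma_Q(q\triangleleft\varsigma_X(x))$ for all $q\in Q$, $x\in X$; (2) $\varsigma_X(q\cdot x)\le\varsigma_Q(q)$ for all $q\in Q$, $x\in X$; (3) $\varsigma_X(q\cdot1_X)\le\varsigma_Q(q)$ for all $q\in Q$.
   Context: Let $A$ be a locale. An involutive $A$-$A$-quantale $Q$ is a sup-lattice with commuting unital left and right $A$-actions $a\triangleright q$, $q\triangleleft a$, an associative join-preserving multiplication with $(a\triangleright x)y=a\triangleright(xy)$, $(x\triangleleft a)y=x(a\triangleright y)$, $(xy)\triangleleft a=x(y\triangleleft a)$, and a join-preserving involution with $x^{**}=x$, $(xy)^*=y^*x^*$, $(a\triangleright x\triangleleft b)^*=b\triangleright x^*\triangleleft a$. A support is a sup-lattice homomorphism $\varsigma_Q:Q\to A$ with $\varsigma_Q(1_Q)=1_A$, $\varsigma_Q(x)\triangleright y\le xx^*y$, $\varsigma_Q(x)\triangleright x=x$; equivariant if $\varsigma_Q(a\triangleright x)=a\wedge\varsigma_Q(x)$. A groupoid quantale is such a $Q$ which is a frame with $(a\triangleright q)\wedge m=a\triangleright(q\wedge m)$, $m\wedge(q\triangleleft a)=(q\wedge m)\triangleleft a$, equipped with an equivariant support and a frame homomorphism $\upsilon:Q\to A$ with $\upsilon(a\triangleright1_Q)=a=\upsilon(1_Q\triangleleft a)$, such that the right adjoint of $Q\otimes_AQ\to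 Q$ preserves joins, $\bigvee_{xy\le a}\upsilon(x)\triangleright y=a$, and $\upsilon(a)\triangleright1_Q=\bigvee_{xx^*\le a}x$. A $Q$-module is a locale $X$ with a left $Q$-action $q\cdot x$ and unital left $A$-module structure $a\triangleright x$ satisfying $(a\triangleright q)\cdot x=a\triangleright(q\cdot x)$, $(q\triangleleft a)\cdot x=q\cdot(a\triangleright x)$, $a\triangleright(x\wedge y)=(a\triangleright x)\wedge y$. A pre-Hilbert $Q$-module has $\langle-,-\rangle:X\times X\to Q$ with $\langle q\cdot x,y\rangle=q\langle x,y\rangle$, $a\triangleright\langle x,1_X\rangle=\langle a\triangleright x,1_X\rangle$, $\langle\bigvee x_\alpha,y\rangle=\bigvee\langle x_\alpha,y\rangle$, $\langle x,y\rangle=\langle y,x\rangle^*$. A supported $Q$-module is a pre-Hilbert $Q$-module with a monotone $\varsigma_X:X\to A$ such that $\varsigma_X(1_X)=1_A$, $\varsigma_X(x)\triangleright1_X\le\langle x,x\rangle\cdot1_X$, and $\varsigma_X(x)\triangleright x=x$. *)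

theory Defs
  imports Main
begin

text \<open>The base locale A, the quantale Q and the module X are carried by
types of class complete_lattice (order = the sup-lattice / frame order, Sup = joins,
top = 1, inf = binary meet); the frame (locale) law is imposed explicitly.\<close>

definition frame_law :: "'a::complete_lattice itself \<Rightarrow> bool" where
  "frame_law _ \<longleftrightarrow> (\<forall>(a::'a) S. inf a (Sup S) = (SUP s\<in>S. inf a s))"

definition sup_hom :: "('a::complete_lattice \<Rightarrow> 'b::complete_lattice) \<Rightarrow> bool" where
  "sup_hom f \<longleftrightarrow> (\<forall>S. f (Sup S) = (SUP s\<in>S. f s))"

definition frame_hom :: "('a::complete_lattice \<Rightarrow> 'b::complete_lattice) \<Rightarrow> bool" where
  "frame_hom f \<longleftrightarrow> sup_hom f \<and> f top = top \<and> (\<forall>x y. f (inf x y) = inf (f x) (f y))"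

definition bi_sup_pres :: "('a::complete_lattice \<Rightarrow> 'b::complete_lattice \<Rightarrow> 'c::complete_lattice) \<Rightarrow> bool" where
  "bi_sup_pres m \<longleftrightarrow> (\<forall>S y. m (Sup S) y = (SUP s\<in>S. m s y)) \<and> (\<forall>x S. m x (Sup S) = (SUP s\<in>S. m x s))"

definition AA_quantale ::
  "('a::complete_lattice \<Rightarrow> 'q::complete_lattice \<Rightarrow> 'q) \<Rightarrow> ('q \<Rightarrow> 'a \<Rightarrow> 'q)
   \<Rightarrow> ('q \<Rightarrow> 'q \<Rightarrow> 'q) \<Rightarrow> ('q \<Rightarrow> 'q) \<Rightarrow> bool" where
  "AA_quantale lact ract mult invo \<longleftrightarrow>
     frame_law TYPE('a) \<and>
     \<comment> \<open>unital left A-module\<close>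
     bi_sup_pres lact \<and> (\<forall>a b q. lact (inf a b) q = lact a (lact b q)) \<and> (\<forall>q. lact top q = q) \<and>
     \<comment> \<open>unital right A-module\<close>
     bi_sup_pres ract \<and> (\<forall>a b q. ract q (inf a b) = ract (ract q a) b) \<and> (\<forall>q. ract q top = q) \<and>
     \<comment> \<open>the actions commute\<close>
     (\<forall>a b q. ract (lact a q) b = lact a (ract q b)) \<and>
     \<comment> \<open>associative join-preserving multiplication\<close>
     bi_sup_pres mult \<and> (\<forall>x y z. mult (mult x y) z = mult x (mult y z)) \<and>
     (\<forall>a x y. mult (lact a x) y = lact a (mult x y)) \<and>
     (\<forall>a x y. mult (ract x a) y = mult x (lact a y)) \<and>
     (\<forall>a x y. ract (mult x y) a = mult x (ract y a)) \<and>
     \<comment> \<open>involution\<close>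
     sup_hom invo \<and> (\<forall>x. invo (invo x) = x) \<and> (\<forall>x y. invo (mult x y) = mult (invo y) (invo x)) \<and>
     (\<forall>a b x. invo (ract (lact a x) b) = ract (lact b (invo x)) a)"

definition is_support ::
  "('a::complete_lattice \<Rightarrow> 'q::complete_lattice \<Rightarrow> 'q) \<Rightarrow> ('q \<Rightarrow> 'q \<Rightarrow> 'q) \<Rightarrow> ('q \<Rightarrow> 'q)
   \<Rightarrow> ('q \<Rightarrow> 'a) \<Rightarrow> bool" where
  "is_support lact mult invo s \<longleftrightarrow>
     sup_hom s \<and> s top = top \<and>
     (\<forall>x y. lact (s x) y \<le> mult (mult x (invo x)) y) \<and>
     (\<forall>x. lact (s x) x = x)"

definition equivariant_support ::
  "('a::complete_lattice \<Rightarrow> 'q::complete_lattice \<Rightarrow> 'q) \<Rightarrow> ('q \<Rightarrow> 'a) \<Rightarrow> bool" where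
  "equivariant_support lact s \<longleftrightarrow> (\<forall>a x. s (lact a x) = inf a (s x))"

text \<open>The tensor product Q \<otimes>_A Q, represented (as usual) by the subsets C of Q \<times> Q
that are down-closed, closed under joins in each coordinate separately (including
empty joins), and A-balanced: (x \<triangleleft> a, y) \<in> C iff (x, a \<triangleright> y) \<in> C.
The element x \<otimes> y corresponds to the least such set containing (x,y); the order
is inclusion.\<close>
definition tensor_closed ::
  "('a::complete_lattice \<Rightarrow> 'q::complete_lattice \<Rightarrow> 'q) \<Rightarrow> ('q \<Rightarrow> 'a \<Rightarrow> 'q) \<Rightarrow> ('q \<times> 'q) set \<Rightarrow> bool" where
  "tensor_closed lact ract C \<longleftrightarrow>
     (\<forall>x y x' y'. (x, y) \<in> C \<and> x' \<le> x \<and> y' \<le> y \<longrightarrow> (x', y') \<in> C) \<and>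
     (\<forall>S y. (\<forall>x\<in>S. (x, y) \<in> C) \<longrightarrow> (Sup S, y) \<in> C) \<and>
     (\<forall>x S. (\<forall>y\<in>S. (x, y) \<in> C) \<longrightarrow> (x, Sup S) \<in> C) \<and>
     (\<forall>x a y. (ract x a, y) \<in> C \<longleftrightarrow> (x, lact a y) \<in> C)"

definition tensor_join ::
  "('a::complete_lattice \<Rightarrow> 'q::complete_lattice \<Rightarrow> 'q) \<Rightarrow> ('q \<Rightarrow> 'a \<Rightarrow> 'q) \<Rightarrow> ('q \<times> 'q) set set \<Rightarrow> ('q \<times> 'q) set" where
  "tensor_join lact ract F = \<Inter> {C. tensor_closed lact ract C \<and> \<Union> F \<subseteq> C}"

text \<open>Right adjoint of the multiplication map Q \<otimes>_A Q \<rightarrow> Q, x \<otimes> y \<mapsto> xy.\<close>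
definition mult_radj :: "('q::complete_lattice \<Rightarrow> 'q \<Rightarrow> 'q) \<Rightarrow> 'q \<Rightarrow> ('q \<times> 'q) set" where
  "mult_radj mult q = {(x, y). mult x y \<le> q}"

definition groupoid_quantale ::
  "('a::complete_lattice \<Rightarrow> 'q::complete_lattice \<Rightarrow> 'q) \<Rightarrow> ('q \<Rightarrow> 'a \<Rightarrow> 'q)
   \<Rightarrow> ('q \<Rightarrow> 'q \<Rightarrow> 'q) \<Rightarrow> ('q \<Rightarrow> 'q) \<Rightarrow> ('q \<Rightarrow> 'a) \<Rightarrow> ('q \<Rightarrow> 'a) \<Rightarrow> bool" where
  "groupoid_quantale lact ract mult invo s ups \<longleftrightarrow>
     AA_quantale lact ract mult invo \<and>
     frame_law TYPE('q) \<and>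
     (\<forall>a q m. inf (lact a q) m = lact a (inf q m)) \<and>
     (\<forall>a q m. inf m (ract q a) = ract (inf q m) a) \<and>
     is_support lact mult invo s \<and> equivariant_support lact s \<and>
     frame_hom ups \<and> (\<forall>a. ups (lact a top) = a) \<and> (\<forall>a. ups (ract top a) = a) \<and>
     (\<forall>S. mult_radj mult (Sup S) = tensor_join lact ract (mult_radj mult ` S)) \<and>
     (\<forall>c. (SUP (x, y) \<in> {(x, y). mult x y \<le> c}. lact (ups x) y) = c) \<and>
     (\<forall>c. lact (ups c) top = Sup {x. mult x (invo x) \<le> c})"

definition Q_module ::
  "('a::complete_lattice \<Rightarrow> 'q::complete_lattice \<Rightarrow> 'q) \<Rightarrow> ('q \<Rightarrow> 'a \<Rightarrow> 'q) \<Rightarrow> ('q \<Rightarrow> 'q \<Rightarrow> 'q)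
   \<Rightarrow> ('q \<Rightarrow> 'x::complete_lattice \<Rightarrow> 'x) \<Rightarrow> ('a \<Rightarrow> 'x \<Rightarrow> 'x) \<Rightarrow> bool" where
  "Q_module lact ract mult qact xact \<longleftrightarrow>
     frame_law TYPE('x) \<and>
     bi_sup_pres qact \<and> (\<forall>p q x. qact (mult p q) x = qact p (qact q x)) \<and>
     bi_sup_pres xact \<and> (\<forall>a b x. xact (inf a b) x = xact a (xact b x)) \<and> (\<forall>x. xact top x = x) \<and>
     (\<forall>a q x. qact (lact a q) x = xact a (qact q x)) \<and>
     (\<forall>a q x. qact (ract q a) x = qact q (xact a x)) \<and>
     (\<forall>a x y. xact a (inf x y) = inf (xact a x) y)"

definition pre_Hilbert_module ::
  "('a::complete_lattice \<Rightarrow> 'q::complete_lattice \<Rightarrow> 'q) \<Rightarrow> ('q \<Rightarrow> 'a \<Rightarrow> 'q) \<Rightarrow> ('q \<Rightarrow> 'q \<Rightarrow> 'q)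
   \<Rightarrow> ('q \<Rightarrow> 'q) \<Rightarrow> ('q \<Rightarrow> 'x::complete_lattice \<Rightarrow> 'x) \<Rightarrow> ('a \<Rightarrow> 'x \<Rightarrow> 'x) \<Rightarrow> ('x \<Rightarrow> 'x \<Rightarrow> 'q) \<Rightarrow> bool" where
  "pre_Hilbert_module lact ract mult invo qact xact ip \<longleftrightarrow>
     Q_module lact ract mult qact xact \<and>
     (\<forall>q x y. ip (qact q x) y = mult q (ip x y)) \<and>
     (\<forall>a x. lact a (ip x top) = ip (xact a x) top) \<and>
     (\<forall>S y. ip (Sup S) y = (SUP x\<in>S. ip x y)) \<and>
     (\<forall>x y. ip x y = invo (ip y x))"

definition supported_module ::
  "('a::complete_lattice \<Rightarrow> 'q::complete_lattice \<Rightarrow> 'q) \<Rightarrow> ('q \<Rightarrow> 'a \<Rightarrow> 'q) \<Rightarrow> ('q \<Rightarrow> 'q \<Rightarrow> 'q)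
   \<Rightarrow> ('q \<Rightarrow> 'q) \<Rightarrow> ('q \<Rightarrow> 'x::complete_lattice \<Rightarrow> 'x) \<Rightarrow> ('a \<Rightarrow> 'x \<Rightarrow> 'x) \<Rightarrow> ('x \<Rightarrow> 'x \<Rightarrow> 'q)
   \<Rightarrow> ('x \<Rightarrow> 'a) \<Rightarrow> bool" where
  "supported_module lact ract mult invo qact xact ip sx \<longleftrightarrow>
     pre_Hilbert_module lact ract mult invo qact xact ip \<and>
     mono sx \<and> sx top = top \<and>
     (\<forall>x. xact (sx x) top \<le> qact (ip x x) top) \<and>
     (\<forall>x. xact (sx x) x = x)"

end

theory Submission
  imports Defs
begin

text \<open>The key observation is that in a supported module
\<open>\<varsigma>\<^sub>X(y) \<triangleright> 1 = \<langle>y,1\<rangle> \<cdot> 1\<close> for every \<open>y\<close>.  This makes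
\<open>x \<mapsto> \<varsigma>\<^sub>X(x) \<triangleright> 1\<close> commute with the \<open>Q\<close>-action, so that, with \<open>p = q \<triangleleft> \<varsigma>\<^sub>X(x)\<close>,
\<open>\<varsigma>\<^sub>Q(p) \<triangleright> 1 \<le> p p\<^sup>* \<cdot> 1 \<le> p \<cdot> 1 = q \<cdot> (\<varsigma>\<^sub>X(x) \<triangleright> 1) = \<varsigma>\<^sub>X(q \<cdot> x) \<triangleright> 1\<close> always holds.
Condition (2) forces \<open>\<varsigma>\<^sub>Q\<langle>1,1\<rangle> = 1\<close>, and then equivariance of \<open>\<varsigma>\<^sub>Q\<close> shows that
\<open>a \<mapsto> a \<triangleright> 1\<close> reflects the order, giving \<open>\<varsigma>\<^sub>Q(p) \<le> \<varsigma>\<^sub>X(q \<cdot> x)\<close>; the reverse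
inequality is (2) itself, since \<open>q \<cdot> x = p \<cdot> x\<close>.\<close>

lemma sup_hom_mono:
  assumes "sup_hom f" and "x \<le> y"
  shows "f x \<le> f y"
proof -
  have "f y = f (Sup {x, y})" using \<open>x \<le> y\<close> by (simp add: sup_absorb2)
  also have "\<dots> = (SUP s\<in>{x, y}. f s)"
    using \<open>sup_hom f\<close> unfolding sup_hom_def by (rule spec)
  finally show ?thesis by (simp add: le_iff_sup)
qed

lemma bi_sup_pres_mono_left:
  assumes "bi_sup_pres m" and "x \<le> x'"
  shows "m x y \<le> m x' y"
proof -
  have "sup_hom (\<lambda>x. m x y)" using assms(1) unfolding bi_sup_pres_def sup_hom_def by simp
  from this assms(2) show ?thesis by (rule sup_hom_mono)
qed

lemma bi_sup_pres_mono_right: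
  assumes "bi_sup_pres m" and "y \<le> y'"
  shows "m x y \<le> m x y'"
proof -
  have "sup_hom (m x)" using assms(1) unfolding bi_sup_pres_def sup_hom_def by simp
  from this assms(2) show ?thesis by (rule sup_hom_mono)
qed

locale supported_Q_module =
  fixes lact :: "'a::complete_lattice \<Rightarrow> 'q::complete_lattice \<Rightarrow> 'q"
    and ract :: "'q \<Rightarrow> 'a \<Rightarrow> 'q"
    and mult :: "'q \<Rightarrow> 'q \<Rightarrow> 'q"
    and invo :: "'q \<Rightarrow> 'q"
    and sQ :: "'q \<Rightarrow> 'a"
    and qact :: "'q \<Rightarrow> 'x::complete_lattice \<Rightarrow> 'x"
    and xact :: "'a \<Rightarrow> 'x \<Rightarrow> 'x"
    and ip :: "'x \<Rightarrow> 'x \<Rightarrow> 'q"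
    and sX :: "'x \<Rightarrow> 'a"
  assumes quantale: "AA_quantale lact ract mult invo"
    and support: "is_support lact mult invo sQ"
    and module: "supported_module lact ract mult invo qact xact ip sX"
begin

lemma bi_sup_pres_qact: "bi_sup_pres qact"
  and bi_sup_pres_xact: "bi_sup_pres xact"
  using module unfolding supported_module_def pre_Hilbert_module_def Q_module_def by fast+

lemma qact_mono_left: "p \<le> p' \<Longrightarrow> qact p x \<le> qact p' x"
  by (rule bi_sup_pres_mono_left[OF bi_sup_pres_qact])

lemma qact_mono_right: "x \<le> x' \<Longrightarrow> qact p x \<le> qact p x'"
  by (rule bi_sup_pres_mono_right[OF bi_sup_pres_qact])

lemma xact_mono_right: "x \<le> x' \<Longrightarrow> xact a x \<le> xact a x'"
  by (rule bi_sup_pres_mono_right[OF bi_sup_pres_xact])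

lemma qact_mult: "qact (mult p q) x = qact p (qact q x)"
  and qact_lact: "qact (lact a q) x = xact a (qact q x)"
  and qact_ract: "qact (ract q a) x = qact q (xact a x)"
  using module unfolding supported_module_def pre_Hilbert_module_def Q_module_def by fast+

lemma ip_qact: "ip (qact q x) y = mult q (ip x y)"
  and lact_ip_top: "lact a (ip x top) = ip (xact a x) top"
  and ip_Sup: "ip (Sup S) y = (SUP x\<in>S. ip x y)"
  and ip_invo: "ip x y = invo (ip y x)"
  using module unfolding supported_module_def pre_Hilbert_module_def by fast+

lemma sX_mono: "x \<le> x' \<Longrightarrow> sX x \<le> sX x'"
  and sX_top: "sX top = top"
  and support_action_le_ip: "xact (sX x) top \<le> qact (ip x x) top"
  and support_action_self: "xact (sX x) x = x"
  using module unfolding supported_module_def by (auto dest: monoD)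

lemma ip_mono_left: "x \<le> x' \<Longrightarrow> ip x y \<le> ip x' y"
  by (rule sup_hom_mono[of "\<lambda>x. ip x y"]) (simp_all add: sup_hom_def ip_Sup)

lemma ip_mono_right:
  assumes "y \<le> y'"
  shows "ip x y \<le> ip x y'"
proof -
  have "sup_hom invo" using quantale unfolding AA_quantale_def by blast
  from this ip_mono_left[OF assms] have "invo (ip y x) \<le> invo (ip y' x)" by (rule sup_hom_mono)
  then show ?thesis using ip_invo[of x y] ip_invo[of x y'] by simp
qed

lemma qact_ip_top_top: "qact (ip top top) top = top"
  using support_action_le_ip[of top] support_action_self[of top] sX_top by (simp add: top_le)

lemma qact_top_top: "qact top top = top"
  using qact_mono_left[of "ip top top" top top] qact_ip_top_top by (simp add: top_le)

lemma support_action_top: "xact (sX y) top = qact (ip y top) top"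
proof (rule antisym)
  have "xact (sX y) top \<le> qact (ip y y) top" by (rule support_action_le_ip)
  also have "\<dots> \<le> qact (ip y top) top" by (intro qact_mono_left ip_mono_right) simp
  finally show "xact (sX y) top \<le> qact (ip y top) top" .
  have "y \<le> xact (sX y) top"
    using xact_mono_right[of y top "sX y"] support_action_self by simp
  then have "qact (ip y top) top \<le> qact (ip (xact (sX y) top) top) top"
    by (intro qact_mono_left ip_mono_left)
  also have "\<dots> = xact (sX y) top"
    using lact_ip_top qact_lact qact_ip_top_top by metis
  finally show "qact (ip y top) top \<le> xact (sX y) top" .
qed

lemma qact_support_action_top: "qact q (xact (sX x) top) = xact (sX (qact q x)) top"
  by (simp add: support_action_top ip_qact qact_mult)

lemma support_action_top_le: "xact (sQ p) top \<le> qact p top"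
proof -
  have "xact (sQ p) top = qact (lact (sQ p) top) top"
    by (simp add: qact_lact qact_top_top)
  also have "\<dots> \<le> qact (mult (mult p (invo p)) top) top"
    using support unfolding is_support_def by (blast intro: qact_mono_left)
  also have "\<dots> = qact p (qact (invo p) top)"
    by (simp add: qact_mult qact_top_top)
  also have "\<dots> \<le> qact p top"
    by (simp add: qact_mono_right)
  finally show ?thesis .
qed

lemma support_ract_action_top_le: "xact (sQ (ract q (sX x))) top \<le> xact (sX (qact q x)) top"
  using support_action_top_le[of "ract q (sX x)"]
  by (simp add: qact_ract qact_support_action_top)

lemma support_ract_le: "sQ (ract q a) \<le> sQ q"
proof -
  have "ract q a \<le> ract q top"
    using quantale bi_sup_pres_mono_right[of ract a top q] unfolding AA_quantale_def by simp
  also have "\<dots> = q"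
    using quantale unfolding AA_quantale_def by simp
  finally show ?thesis
    using support sup_hom_mono unfolding is_support_def by blast
qed

lemma xact_top_reflects_order:
  assumes "equivariant_support lact sQ" and "sQ (ip top top) = top"
    and "xact a top \<le> xact b top"
  shows "a \<le> b"
proof -
  have "lact a (ip top top) \<le> lact b (ip top top)"
    using ip_mono_left[OF \<open>xact a top \<le> xact b top\<close>] by (simp add: lact_ip_top)
  then have "sQ (lact a (ip top top)) \<le> sQ (lact b (ip top top))"
    using support sup_hom_mono unfolding is_support_def by blast
  then show ?thesis
    using assms(1,2) unfolding equivariant_support_def by simp
qed

lemma support_qact_eq_if_bounded:
  assumes "equivariant_support lact sQ"
    and bounded: "\<And>q x. sX (qact q x) \<le> sQ q"
  shows "sX (qact q x) = sQ (ract q (sX x))"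
proof (rule antisym)
  show "sX (qact q x) \<le> sQ (ract q (sX x))"
    using bounded[of "ract q (sX x)" x] by (simp add: qact_ract support_action_self)
  have "sQ (ip top top) = top"
    using bounded[of "ip top top" top] by (simp add: qact_ip_top_top sX_top top_le)
  then show "sQ (ract q (sX x)) \<le> sX (qact q x)"
    using xact_top_reflects_order[OF assms(1)] support_ract_action_top_le by blast
qed

end

theorem lemma4p5:
  fixes lact :: "'a::complete_lattice \<Rightarrow> 'q::complete_lattice \<Rightarrow> 'q"
    and ract :: "'q \<Rightarrow> 'a \<Rightarrow> 'q"
    and mult :: "'q \<Rightarrow> 'q \<Rightarrow> 'q"
    and invo :: "'q \<Rightarrow> 'q"
    and sQ :: "'q \<Rightarrow> 'a"
    and ups :: "'q \<Rightarrow> 'a"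
    and qact :: "'q \<Rightarrow> 'x::complete_lattice \<Rightarrow> 'x"
    and xact :: "'a \<Rightarrow> 'x \<Rightarrow> 'x"
    and ip :: "'x \<Rightarrow> 'x \<Rightarrow> 'q"
    and sX :: "'x \<Rightarrow> 'a"
  assumes "groupoid_quantale lact ract mult invo sQ ups"
    and "supported_module lact ract mult invo qact xact ip sX"
  shows "((\<forall>q x. sX (qact q x) = sQ (ract q (sX x))) \<longleftrightarrow> (\<forall>q x. sX (qact q x) \<le> sQ q))
       \<and> ((\<forall>q x. sX (qact q x) \<le> sQ q) \<longleftrightarrow> (\<forall>q. sX (qact q top) \<le> sQ q))"
proof -
  have quantale: "AA_quantale lact ract mult invo" and support: "is_support lact mult invo sQ"
    and equivariant: "equivariant_support lact sQ"
    using assms(1) unfolding groupoid_quantale_def by fast+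
  interpret supported_Q_module lact ract mult invo sQ qact xact ip sX
    using quantale support assms(2) by unfold_locales
  have "(\<forall>q x. sX (qact q x) = sQ (ract q (sX x))) \<longleftrightarrow> (\<forall>q x. sX (qact q x) \<le> sQ q)"
    using support_qact_eq_if_bounded[OF equivariant] support_ract_le by metis
  moreover have "(\<forall>q x. sX (qact q x) \<le> sQ q) \<longleftrightarrow> (\<forall>q. sX (qact q top) \<le> sQ q)"
    using sX_mono[OF qact_mono_right[OF top_greatest]] order_trans by blast
  ultimately show ?thesis ..
qed

end
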